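(* For any two graphs $G_1$ and $G_2$, $st(G_1\times G_2)\le st(G_1)\,st(G_2)+st(G_1)+st(G_2)$.
   Context: $G_1\times G_2$ is the Cartesian product: vertex set $V_1\times V_2$, with $(u_1,u_2)$ adjacent to $(v_1,v_2)$ iff either $u_1=v_1$ and $u_2v_2$ is an edge of $G_2$, or $u_2=v_2$ and $u_1v_1$ is an edge of $G_1$. A sorted ordering of a graph on $n$ vertices is a bijection $\pi$ from its vertices to $\{1,\dots,n\}$. A directed matching is a matching some of whose edges are oriented. A sorting network on $G$ is a triple $\mathcal{S}(H,M,\pi)$ where $H$ is a connected spanning subgraph of $G$, $\pi$ a sorted ordering, and $M=(m_1,\dots,m_{|M|})$ a sequence of directed matchings of $H$ covering every edge of $H$ at least once; each vertex holds a pebble with a value, and at stage $i$ each directed edge $u\to v$ of $m_i$ puts the smaller of its two pebbles on $u$ and the larger on $v$, while each undirected edge of $m_i$ swaps its pebbles; after all stages, for every initial arrangement of $n$ distinct values, vertex $i$ must hold the pebble of rank $\pi(i)$. The depth is $|M|$. The sorting number $st(G)$ is the minimum depth of any sorting network on $G$ (over all spanning subgraphs and sorted orderings); $st(G)=\infty$ if none exists. *)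

theory Defs
  imports Main "HOL-Library.Extended_Nat"
begin

definition graph :: "'a set \<Rightarrow> 'a set set \<Rightarrow> bool" where
  "graph V E \<longleftrightarrow> finite V \<and> (\<forall>e\<in>E. \<exists>u v. e = {u, v} \<and> u \<noteq> v \<and> u \<in> V \<and> v \<in> V)"

definition cart_edges :: "'a set \<Rightarrow> 'a set set \<Rightarrow> 'b set \<Rightarrow> 'b set set \<Rightarrow> ('a \<times> 'b) set set" where
  "cart_edges V1 E1 V2 E2 =
     {{(u1, u2), (v1, v2)} | u1 u2 v1 v2.
        (u1 = v1 \<and> u1 \<in> V1 \<and> {u2, v2} \<in> E2) \<or> (u2 = v2 \<and> u2 \<in> V2 \<and> {u1, v1} \<in> E1)}"

definition connected_graph :: "'a set \<Rightarrow> 'a set set \<Rightarrow> bool" where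
  "connected_graph V E \<longleftrightarrow> (\<forall>u\<in>V. \<forall>v\<in>V. (u, v) \<in> {(x, y). {x, y} \<in> E}\<^sup>*)"

(* A directed matching: a set of edges (u,v,b); b = True means oriented u \<rightarrow> v
   (smaller pebble to u), b = False means an undirected edge {u,v} (swap). *)
type_synonym 'a dmatching = "('a \<times> 'a \<times> bool) set"

fun ends :: "'a \<times> 'a \<times> bool \<Rightarrow> 'a set" where
  "ends (u, v, b) = {u, v}"

definition dir_matching :: "'a set set \<Rightarrow> 'a dmatching \<Rightarrow> bool" where
  "dir_matching EH m \<longleftrightarrow> (\<forall>p\<in>m. ends p \<in> EH) \<and>
     (\<forall>p\<in>m. \<forall>q\<in>m. p \<noteq> q \<longrightarrow> ends p \<inter> ends q = {})"

definition step :: "'a dmatching \<Rightarrow> ('a \<Rightarrow> nat) \<Rightarrow> ('a \<Rightarrow> nat)" where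
  "step m f x =
     (if \<exists>y. (x, y, True) \<in> m then min (f x) (f (SOME y. (x, y, True) \<in> m))
      else if \<exists>y. (y, x, True) \<in> m then max (f x) (f (SOME y. (y, x, True) \<in> m))
      else if \<exists>y. (x, y, False) \<in> m \<or> (y, x, False) \<in> m
        then f (SOME y. (x, y, False) \<in> m \<or> (y, x, False) \<in> m)
      else f x)"

definition run :: "'a dmatching list \<Rightarrow> ('a \<Rightarrow> nat) \<Rightarrow> ('a \<Rightarrow> nat)" where
  "run M f = foldl (\<lambda>g m. step m g) f M"

(* S(H,M,\<pi>) is a sorting network on G = (V,E); H = (V,EH).
   Initial arrangements of n distinct values are represented by their ranks,
   i.e. bijections V \<rightarrow> {1..n}. *)
definition sorting_network ::
  "'a set \<Rightarrow> 'a set set \<Rightarrow> 'a set set \<Rightarrow> 'a dmatching list \<Rightarrow> ('a \<Rightarrow> nat) \<Rightarrow> bool" where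
  "sorting_network V E EH M \<pi> \<longleftrightarrow>
     EH \<subseteq> E \<and> connected_graph V EH \<and>
     bij_betw \<pi> V {1..card V} \<and>
     (\<forall>m\<in>set M. dir_matching EH m) \<and>
     (\<forall>e\<in>EH. \<exists>m\<in>set M. \<exists>p\<in>m. e = ends p) \<and>
     (\<forall>f. bij_betw f V {1..card V} \<longrightarrow> (\<forall>x\<in>V. run M f x = \<pi> x))"

definition sorting_number :: "'a set \<Rightarrow> 'a set set \<Rightarrow> enat" where
  "sorting_number V E =
     (if \<exists>EH M \<pi>. sorting_network V E EH M \<pi>
      then enat (LEAST d. \<exists>EH M \<pi>. sorting_network V E EH M \<pi> \<and> length M = d)
      else \<infinity>)"

end

theory Submission
  imports Defs
begin

text \<open>Let \<open>(M1, \<pi>1)\<close> and \<open>(M2, \<pi>2)\<close> sort \<open>G1\<close> and \<open>G2\<close>, with \<open>n2 = |V2|\<close>. The product network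
  first sorts every column \<open>{u} \<times> V2\<close> with \<open>M2\<close>; then, for each stage of \<open>M1\<close>, it applies that
  stage in all rows \<open>V1 \<times> {x}\<close> at once and re-sorts all columns with \<open>M2\<close>, in total
  \<open>|M2| + |M1| (1 + |M2|)\<close> stages. A column is sorted upwards or downwards (by reversing the
  comparators of \<open>M2\<close>) according to whether it is the lower or the upper end of a comparator of
  the next row stage.

  By the 0-1 principle only 0-1 inputs matter. A sorted column is then determined by its number
  of ones, and a row comparator between an upward column with \<open>a\<close> ones and a downward column
  with \<open>b\<close> ones leaves \<open>a + b - n2\<close> and \<open>min n2 (a + b)\<close> ones. These counts evolve as the sum
  of \<open>n2\<close> 0-1 layers of almost equal size, each of which is sorted by \<open>M1\<close> itself; hence the
  final configuration is sorted for the column-major ranking \<open>(\<pi>1 u - 1) n2 + \<pi>2 x\<close>.\<close>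

text \<open>A stage of \<open>step\<close> with the comparator operations abstracted; besides pebble values it is
  used to track where pebbles come from, column counts, and layers.\<close>

definition stage ::
  "('b \<Rightarrow> 'b \<Rightarrow> 'b) \<Rightarrow> ('b \<Rightarrow> 'b \<Rightarrow> 'b) \<Rightarrow> 'a dmatching \<Rightarrow> ('a \<Rightarrow> 'b) \<Rightarrow> 'a \<Rightarrow> 'b" where
  "stage lo hi m f x =
     (if \<exists>y. (x, y, True) \<in> m then lo (f x) (f (SOME y. (x, y, True) \<in> m))
      else if \<exists>y. (y, x, True) \<in> m then hi (f x) (f (SOME y. (y, x, True) \<in> m))
      else if \<exists>y. (x, y, False) \<in> m \<or> (y, x, False) \<in> m
        then f (SOME y. (x, y, False) \<in> m \<or> (y, x, False) \<in> m)
      else f x)"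

lemma step_eq_stage: "step m = stage min max m"
  by (intro ext) (simp add: step_def stage_def)

definition proper_matching :: "'a dmatching \<Rightarrow> bool" where
  "proper_matching m \<longleftrightarrow> (\<forall>u v b. (u, v, b) \<in> m \<longrightarrow> u \<noteq> v) \<and>
     (\<forall>p\<in>m. \<forall>q\<in>m. p \<noteq> q \<longrightarrow> ends p \<inter> ends q = {})"

lemma proper_matching_no_loop: "proper_matching m \<Longrightarrow> (u, v, b) \<in> m \<Longrightarrow> u \<noteq> v"
  by (auto simp: proper_matching_def)

lemma proper_matching_unique:
  "proper_matching m \<Longrightarrow> p \<in> m \<Longrightarrow> q \<in> m \<Longrightarrow> x \<in> ends p \<Longrightarrow> x \<in> ends q \<Longrightarrow> p = q"
  unfolding proper_matching_def by blast

lemma proper_matching_same_edge: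
  assumes "proper_matching m" "(a, b, c) \<in> m" "(a', b', c') \<in> m" "x \<in> {a, b}" "x \<in> {a', b'}"
  shows "a = a' \<and> b = b' \<and> c = c'"
  using proper_matching_unique[OF assms(1-3), of x] assms(4,5) by simp

lemma stage_lower:
  assumes "proper_matching m" "(x, y, True) \<in> m" shows "stage lo hi m f x = lo (f x) (f y)"
proof -
  have partner: "z = y" if "(x, z, True) \<in> m" for z
    using proper_matching_unique[OF assms(1) that assms(2), of x] by simp
  have "(SOME z. (x, z, True) \<in> m) = y"
    using assms(2) partner by (rule some_equality)
  with assms(2) show ?thesis by (simp add: stage_def, blast)
qed

lemma stage_upper:
  assumes "proper_matching m" "(y, x, True) \<in> m" shows "stage lo hi m f x = hi (f x) (f y)"
proof -
  have not_lower: "(x, z, True) \<notin> m" for z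
    using proper_matching_unique[OF assms(1) _ assms(2), of "(x, z, True)" x]
      proper_matching_no_loop[OF assms] by auto
  have partner: "z = y" if "(z, x, True) \<in> m" for z
    using proper_matching_unique[OF assms(1) that assms(2), of x] by simp
  have "(SOME z. (z, x, True) \<in> m) = y"
    using assms(2) partner by (rule some_equality)
  with assms(2) not_lower show ?thesis by (simp add: stage_def, blast)
qed

lemma stage_swap:
  assumes "proper_matching m" "(x, y, False) \<in> m \<or> (y, x, False) \<in> m"
  shows "stage lo hi m f x = f y"
proof -
  obtain p where p: "p \<in> m" "p = (x, y, False) \<or> p = (y, x, False)" using assms(2) by blast
  have partner: "q = p" if "q \<in> m" "x \<in> ends q" for q
    using proper_matching_unique[OF assms(1) that(1) p(1) that(2)] p(2) by auto
  have not_lower: "(x, z, True) \<notin> m" and not_upper: "(z, x, True) \<notin> m" for z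
    using partner[of "(x, z, True)"] partner[of "(z, x, True)"] p(2) by auto
  have "x \<noteq> y" using p proper_matching_no_loop[OF assms(1)] by auto
  then have partner_vertex: "z = y" if "(x, z, False) \<in> m \<or> (z, x, False) \<in> m" for z
    using that partner[of "(x, z, False)"] partner[of "(z, x, False)"] p(2) by auto
  have "(SOME z. (x, z, False) \<in> m \<or> (z, x, False) \<in> m) = y"
    using assms(2) partner_vertex by (rule some_equality)
  with assms(2) not_lower not_upper show ?thesis by (simp add: stage_def, blast)
qed

lemma stage_idle:
  assumes "\<And>y b. (x, y, b) \<notin> m \<and> (y, x, b) \<notin> m" shows "stage lo hi m f x = f x"
  using assms by (simp add: stage_def)

lemma matching_cases:
  obtains (lower) y where "(x, y, True) \<in> m" | (upper) y where "(y, x, True) \<in> m"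
  | (swap) y where "(x, y, False) \<in> m \<or> (y, x, False) \<in> m"
  | (idle) "\<And>y b. (x, y, b) \<notin> m \<and> (y, x, b) \<notin> m"
  by (metis (full_types))

lemma run_Nil [simp]: "run [] f = f"
  by (simp add: run_def)

lemma run_Cons [simp]: "run (m # M) f = run M (step m f)"
  by (simp add: run_def)

lemma run_append: "run (M @ M') f = run M' (run M f)"
  by (simp add: run_def)

lemma step_comp_mono: "mono g \<Longrightarrow> step m (\<lambda>x. g (f x)) x = g (step m f x)"
  by (simp add: step_def min_of_mono max_of_mono)

lemma run_comp_mono: "mono g \<Longrightarrow> run M (\<lambda>x. g (f x)) = (\<lambda>x. g (run M f x))"
proof (induction M arbitrary: f)
  case (Cons m M)
  have "step m (\<lambda>x. g (f x)) = (\<lambda>x. g (step m f x))"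
    using Cons.prems by (intro ext step_comp_mono)
  with Cons show ?case by simp
qed simp

lemma step_le_bound: "\<forall>y. g y \<le> K \<Longrightarrow> step m g x \<le> K"
  unfolding step_def by (auto simp: min_def max_def)

lemma run_le_bound: "\<forall>y. g y \<le> K \<Longrightarrow> run M g x \<le> K"
  by (induction M arbitrary: g) (simp_all add: step_le_bound)

section \<open>The 0-1 principle\<close>

lemma zero_one_threshold_of_ranking:
  assumes fin: "finite V" and zero_one: "\<forall>z. h z \<le> (1::nat)"
  obtains f where "bij_betw f V {1..card V}"
    and "\<And>z. h z = (if card V - card {z\<in>V. h z = 1} < f z then 1 else 0)"
proof -
  define zeros where "zeros = {z\<in>V. h z = 0}"
  define ones where "ones = {z\<in>V. h z = 1}"
  have fin_parts: "finite zeros" "finite ones" using fin by (auto simp: zeros_def ones_def)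
  have V_split: "V = zeros \<union> ones" using zero_one by (auto simp: zeros_def ones_def le_Suc_eq)
  have card_V: "card V = card zeros + card ones"
    unfolding V_split by (rule card_Un_disjoint[OF fin_parts]) (auto simp: zeros_def ones_def)
  obtain a where a: "bij_betw a zeros {1..card zeros}"
    using bij_betw_iff_card[OF fin_parts(1)] by fastforce
  obtain b where b: "bij_betw b ones {card zeros + 1..card V}"
    using bij_betw_iff_card[OF fin_parts(2)] card_V by fastforce
  text \<open>Outside \<open>V\<close> the ranking is chosen so that it still thresholds to \<open>h\<close>.\<close>
  define f where "f z = (if z \<in> zeros then a z else if z \<in> ones then b z
    else if h z = 1 then card V + 1 else 0)" for z
  have "bij_betw f zeros {1..card zeros}"
    using a by (rule bij_betw_cong[THEN iffD1, rotated]) (simp add: f_def)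
  moreover have "bij_betw f ones {card zeros + 1..card V}"
    using b by (rule bij_betw_cong[THEN iffD1, rotated]) (auto simp: f_def zeros_def ones_def)
  ultimately have "bij_betw f (zeros \<union> ones) ({1..card zeros} \<union> {card zeros + 1..card V})"
    by (rule bij_betw_combine) auto
  moreover have "{1..card zeros} \<union> {card zeros + 1..card V} = {1..card V}" using card_V by auto
  ultimately have f: "bij_betw f V {1..card V}" using V_split by simp
  have "h z = (if card zeros < f z then 1 else 0)" for z
  proof (cases "z \<in> zeros")
    case True
    then have "a z \<le> card zeros" using bij_betwE[OF a] by auto
    with True show ?thesis by (simp add: f_def zeros_def)
  next
    case not_zero: False
    show ?thesis
    proof (cases "z \<in> ones")
      case True
      then have "card zeros < b z" using bij_betwE[OF b] by auto
      with True not_zero show ?thesis by (simp add: f_def ones_def)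
    next
      case False
      with not_zero show ?thesis
        using zero_one[rule_format, of z] card_V V_split by (auto simp: f_def le_Suc_eq)
    qed
  qed
  with f card_V show thesis by (intro that) (simp_all add: ones_def)
qed

lemma sorting_run_zero_one:
  assumes fin: "finite V" and sorts: "\<forall>f. bij_betw f V {1..card V} \<longrightarrow> (\<forall>x\<in>V. run M f x = \<pi> x)"
    and zero_one: "\<forall>z. h z \<le> (1::nat)" and x: "x \<in> V"
  shows "run M h x = (if card V - card {z\<in>V. h z = 1} < \<pi> x then 1 else 0)"
proof -
  define t where "t = card V - card {z\<in>V. h z = 1}"
  obtain f where f: "bij_betw f V {1..card V}" and h: "\<And>z. h z = (if t < f z then 1 else 0)"
    using zero_one_threshold_of_ranking[OF fin zero_one] unfolding t_def by blast
  have "h = (\<lambda>z. if t < f z then 1 else 0)" using h by blast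
  moreover have "mono (\<lambda>k. if t < k then 1 else 0 :: nat)" by (auto simp: mono_def)
  ultimately have "run M h x = (if t < run M f x then 1 else 0)"
    using run_comp_mono[of "\<lambda>k. if t < k then 1 else 0 :: nat" M f] by simp
  then show ?thesis using sorts f x by (simp add: t_def)
qed

lemma card_filter_bij:
  assumes "bij_betw f A B" shows "card {x\<in>A. P (f x)} = card {k\<in>B. P k}"
proof -
  have "f ` {x\<in>A. P (f x)} = {k\<in>B. P k}" using assms by (auto simp: bij_betw_def)
  moreover have "inj_on f {x\<in>A. P (f x)}" using assms by (auto simp: bij_betw_def inj_on_def)
  ultimately show ?thesis using card_image by metis
qed

lemma sorts_if_sorts_zero_one:
  assumes f: "bij_betw f V {1..card V}" and x: "x \<in> V" and \<rho>: "\<rho> x \<le> card V"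
    and zero_one: "\<And>h. \<forall>z. h z \<le> (1::nat) \<Longrightarrow>
      run M h x = (if card V - card {z\<in>V. h z = 1} < \<rho> x then 1 else 0)"
  shows "run M f x = \<rho> x"
proof -
  have threshold: "t < run M f x \<longleftrightarrow> t < \<rho> x" if t: "t \<le> card V" for t
  proof -
    define g where "g k = (if t < k then 1 else (0::nat))" for k
    have "mono g" by (auto simp: mono_def g_def)
    then have "run M (\<lambda>z. g (f z)) x = g (run M f x)" by (simp add: run_comp_mono)
    moreover have "{z\<in>V. g (f z) = 1} = {z\<in>V. t < f z}" by (auto simp: g_def)
    then have "card {z\<in>V. g (f z) = 1} = card {k\<in>{1..card V}. t < k}"
      using card_filter_bij[OF f, of "\<lambda>k. t < k"] by simp
    moreover have "{k\<in>{1..card V}. t < k} = {t<..card V}" using t by auto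
    ultimately have "g (run M f x) = (if t < \<rho> x then 1 else 0)"
      using zero_one[of "\<lambda>z. g (f z)"] t by (simp add: g_def)
    then show ?thesis by (simp add: g_def split: if_splits)
  qed
  show ?thesis
    using threshold[of "run M f x"] threshold[of "\<rho> x"] \<rho> by (cases "run M f x \<le> card V") auto
qed

section \<open>Reversed and parallel networks\<close>

fun reverse_edge :: "'a \<times> 'a \<times> bool \<Rightarrow> 'a \<times> 'a \<times> bool" where
  "reverse_edge (u, v, b) = (if b then (v, u, b) else (u, v, b))"

definition reverse_matching :: "'a dmatching \<Rightarrow> 'a dmatching" where
  "reverse_matching m = reverse_edge ` m"

lemma reverse_edge_reverse_edge [simp]: "reverse_edge (reverse_edge p) = p"
  by (cases p) auto

lemma ends_reverse_edge [simp]: "ends (reverse_edge p) = ends p"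
  by (cases p) auto

lemma reverse_matching_iff [simp]:
  "(a, b, c) \<in> reverse_matching m \<longleftrightarrow> (if c then (b, a, c) \<in> m else (a, b, c) \<in> m)"
proof -
  have "(a, b, c) \<in> reverse_edge ` m \<longleftrightarrow> reverse_edge (a, b, c) \<in> m"
    by (auto intro: rev_image_eqI simp del: reverse_edge.simps)
  then show ?thesis by (simp add: reverse_matching_def)
qed

lemma proper_matching_reverse:
  assumes "proper_matching m" shows "proper_matching (reverse_matching m)"
  unfolding proper_matching_def
proof (intro conjI allI impI ballI)
  fix u v b assume "(u, v, b) \<in> reverse_matching m"
  then show "u \<noteq> v"
    using proper_matching_no_loop[OF assms] by (auto split: if_splits)
next
  fix p q assume "p \<in> reverse_matching m" "q \<in> reverse_matching m" "p \<noteq> q"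
  then obtain p' q' where "p' \<in> m" "q' \<in> m" "p = reverse_edge p'" "q = reverse_edge q'" "p' \<noteq> q'"
    unfolding reverse_matching_def by blast
  then show "ends p \<inter> ends q = {}" using assms unfolding proper_matching_def by simp
qed

lemma step_reverse_matching:
  assumes m: "proper_matching m" and zero_one: "\<forall>y. g y \<le> (1::nat)"
  shows "step (reverse_matching m) g x = 1 - step m (\<lambda>y. 1 - g y) x"
proof -
  have m': "proper_matching (reverse_matching m)" using proper_matching_reverse[OF m] .
  have g: "g y \<le> 1" for y using zero_one by blast
  show ?thesis
  proof (cases x m rule: matching_cases)
    case (lower y)
    then have rev: "(y, x, True) \<in> reverse_matching m" by simp
    show ?thesis
      using g[of x] g[of y] unfolding step_eq_stage stage_upper[OF m' rev] stage_lower[OF m lower]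
      by linarith
  next
    case (upper y)
    then have rev: "(x, y, True) \<in> reverse_matching m" by simp
    show ?thesis
      using g[of x] g[of y] unfolding step_eq_stage stage_lower[OF m' rev] stage_upper[OF m upper]
      by linarith
  next
    case (swap y)
    then have rev: "(x, y, False) \<in> reverse_matching m \<or> (y, x, False) \<in> reverse_matching m"
      by simp
    show ?thesis
      using g[of y] unfolding step_eq_stage stage_swap[OF m' rev] stage_swap[OF m swap] by simp
  next
    case idle
    then have rev: "(x, y, b) \<notin> reverse_matching m \<and> (y, x, b) \<notin> reverse_matching m" for y b
      by (cases b) auto
    show ?thesis
      using g[of x] unfolding step_eq_stage stage_idle[OF idle] stage_idle[OF rev] by simp
  qed
qed

lemma run_reverse_matching:
  assumes "\<forall>m\<in>set M. proper_matching m" and "\<forall>y. g y \<le> (1::nat)"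
  shows "run (map reverse_matching M) g x = 1 - run M (\<lambda>y. 1 - g y) x"
  using assms
proof (induction M arbitrary: g)
  case Nil
  then show ?case by (simp add: le_Suc_eq)
next
  case (Cons m M)
  have "(\<lambda>y. 1 - step (reverse_matching m) g y) = step m (\<lambda>y. 1 - g y)"
  proof
    fix y
    have "step m (\<lambda>y. 1 - g y) y \<le> 1" by (rule step_le_bound) auto
    then show "1 - step (reverse_matching m) g y = step m (\<lambda>y. 1 - g y) y"
      using step_reverse_matching[OF _ Cons.prems(2), of m y] Cons.prems(1) by simp
  qed
  moreover have "run (map reverse_matching M) (step (reverse_matching m) g) x
      = 1 - run M (\<lambda>y. 1 - step (reverse_matching m) g y) x"
    using Cons.prems by (intro Cons.IH) (auto intro: step_le_bound)
  ultimately show ?case by simp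
qed

text \<open>Independent matchings \<open>mm j\<close> run on the copies \<open>range (\<iota> j)\<close>, \<open>j \<in> J\<close>, of a vertex set.\<close>

definition parallel :: "'j set \<Rightarrow> ('j \<Rightarrow> 'a \<Rightarrow> 'c) \<Rightarrow> ('j \<Rightarrow> 'a dmatching) \<Rightarrow> 'c dmatching" where
  "parallel J \<iota> mm = {(\<iota> j a, \<iota> j b, c) | j a b c. j \<in> J \<and> (a, b, c) \<in> mm j}"

definition disjoint_copies :: "'j set \<Rightarrow> ('j \<Rightarrow> 'a \<Rightarrow> 'c) \<Rightarrow> bool" where
  "disjoint_copies J \<iota> \<longleftrightarrow> (\<forall>j\<in>J. \<forall>j'\<in>J. \<forall>a a'. \<iota> j a = \<iota> j' a' \<longrightarrow> j = j' \<and> a = a')"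

lemma parallel_memI: "j \<in> J \<Longrightarrow> (a, b, c) \<in> mm j \<Longrightarrow> (\<iota> j a, \<iota> j b, c) \<in> parallel J \<iota> mm"
  unfolding parallel_def by blast

lemma parallel_memE:
  assumes "(x, y, c) \<in> parallel J \<iota> mm"
  obtains j a b where "j \<in> J" "(a, b, c) \<in> mm j" "x = \<iota> j a" "y = \<iota> j b"
  using assms unfolding parallel_def by blast

lemma proper_matching_parallel:
  assumes copies: "disjoint_copies J \<iota>" and proper: "\<forall>j\<in>J. proper_matching (mm j)"
  shows "proper_matching (parallel J \<iota> mm)"
  unfolding proper_matching_def
proof (intro conjI allI impI ballI)
  fix u v c assume "(u, v, c) \<in> parallel J \<iota> mm"
  then show "u \<noteq> v"
    by (elim parallel_memE) (metis copies proper disjoint_copies_def proper_matching_no_loop)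
next
  fix p q assume pq: "p \<in> parallel J \<iota> mm" "q \<in> parallel J \<iota> mm" "p \<noteq> q"
  obtain x y c x' y' c' where p: "p = (x, y, c)" and q: "q = (x', y', c')" by (cases p, cases q)
  obtain j a b where j: "j \<in> J" "(a, b, c) \<in> mm j" "x = \<iota> j a" "y = \<iota> j b"
    using pq(1) p by (blast elim: parallel_memE)
  obtain j' a' b' where j': "j' \<in> J" "(a', b', c') \<in> mm j'" "x' = \<iota> j' a'" "y' = \<iota> j' b'"
    using pq(2) q by (blast elim: parallel_memE)
  show "ends p \<inter> ends q = {}"
  proof (rule ccontr)
    assume "ends p \<inter> ends q \<noteq> {}"
    then obtain z where "z \<in> {x, y}" "z \<in> {x', y'}" using p q by auto
    then obtain e e' where e: "e \<in> {a, b}" "e' \<in> {a', b'}" "\<iota> j e = \<iota> j' e'"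
      using j j' by auto
    then have "j = j'" "e = e'" using copies j(1) j'(1) unfolding disjoint_copies_def by blast+
    then have "p = q"
      using proper_matching_same_edge[OF proper[rule_format, OF j(1)] j(2), of a' b' c' e] j j' e p q
      by simp
    with pq(3) show False by simp
  qed
qed

lemma stage_parallel:
  assumes copies: "disjoint_copies J \<iota>" and proper: "\<forall>j\<in>J. proper_matching (mm j)" and j: "j \<in> J"
  shows "stage lo hi (parallel J \<iota> mm) F (\<iota> j a) = stage lo hi (mm j) (\<lambda>b. F (\<iota> j b)) a"
proof -
  note P = proper_matching_parallel[OF copies proper]
  have mj: "proper_matching (mm j)" using proper j by blast
  show ?thesis
  proof (cases a "mm j" rule: matching_cases)
    case (lower y)
    then show ?thesis
      using stage_lower[OF P parallel_memI[where mm=mm and \<iota>=\<iota>, OF j lower]] stage_lower[OF mj lower, of lo hi "\<lambda>b. F (\<iota> j b)"]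
      by simp
  next
    case (upper y)
    then show ?thesis
      using stage_upper[OF P parallel_memI[where mm=mm and \<iota>=\<iota>, OF j upper]] stage_upper[OF mj upper, of lo hi "\<lambda>b. F (\<iota> j b)"]
      by simp
  next
    case (swap y)
    then have "(\<iota> j a, \<iota> j y, False) \<in> parallel J \<iota> mm \<or> (\<iota> j y, \<iota> j a, False) \<in> parallel J \<iota> mm"
      using parallel_memI[where mm=mm and \<iota>=\<iota>, OF j] by blast
    then show ?thesis
      using stage_swap[OF P, of _ _ lo hi F] stage_swap[OF mj swap, of lo hi "\<lambda>b. F (\<iota> j b)"]
      by simp
  next
    case idle
    have "(\<iota> j a, y, c) \<notin> parallel J \<iota> mm \<and> (y, \<iota> j a, c) \<notin> parallel J \<iota> mm" for y c
      using idle copies j unfolding disjoint_copies_def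
      by (auto elim!: parallel_memE) metis+
    then show ?thesis using stage_idle stage_idle[OF idle] by metis
  qed
qed

lemma run_parallel:
  assumes copies: "disjoint_copies J \<iota>" and proper: "\<forall>m\<in>set M. \<forall>j\<in>J. proper_matching (\<phi> j m)"
    and j: "j \<in> J"
  shows "run (map (\<lambda>m. parallel J \<iota> (\<lambda>j. \<phi> j m)) M) F (\<iota> j a) = run (map (\<phi> j) M) (\<lambda>b. F (\<iota> j b)) a"
  using proper
proof (induction M arbitrary: F)
  case (Cons m M)
  have "(\<lambda>b. step (parallel J \<iota> (\<lambda>j. \<phi> j m)) F (\<iota> j b)) = step (\<phi> j m) (\<lambda>b. F (\<iota> j b))"
    unfolding step_eq_stage by (intro ext stage_parallel[OF copies _ j]) (use Cons.prems in simp)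
  with Cons show ?case by simp
qed simp

section \<open>Column counts and balanced layers\<close>

definition matching_on :: "'a set \<Rightarrow> 'a dmatching \<Rightarrow> bool" where
  "matching_on V m \<longleftrightarrow> (\<forall>u v b. (u, v, b) \<in> m \<longrightarrow> u \<in> V \<and> v \<in> V)"

text \<open>The vertex whose pebble lands on \<open>u\<close> in stage \<open>m\<close> on input \<open>g\<close>.\<close>

definition stage_source :: "'a dmatching \<Rightarrow> ('a \<Rightarrow> nat) \<Rightarrow> 'a \<Rightarrow> 'a" where
  "stage_source m g = stage (\<lambda>a b. if g a \<le> g b then a else b) (\<lambda>a b. if g b \<le> g a then a else b) m id"

lemma step_eq_source: "proper_matching m \<Longrightarrow> step m g u = g (stage_source m g u)"
  by (cases u m rule: matching_cases)
    (simp_all add: stage_source_def step_eq_stage stage_lower stage_upper stage_swap stage_idle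
      min_def max_def)

lemma stage_source_involution:
  assumes m: "proper_matching m" shows "stage_source m g (stage_source m g u) = u"
proof (cases u m rule: matching_cases)
  case (lower v)
  then show ?thesis by (simp add: stage_source_def stage_lower[OF m] stage_upper[OF m])
next
  case (upper v)
  then show ?thesis by (simp add: stage_source_def stage_lower[OF m] stage_upper[OF m])
next
  case (swap v)
  moreover have "(v, u, False) \<in> m \<or> (u, v, False) \<in> m" using swap by blast
  ultimately show ?thesis by (simp add: stage_source_def stage_swap[OF m])
qed (simp add: stage_source_def stage_idle)

lemma stage_source_in:
  assumes m: "proper_matching m" "matching_on V m" and u: "u \<in> V" shows "stage_source m g u \<in> V"
  using m(2) u unfolding matching_on_def
  by (cases u m rule: matching_cases)
    (auto simp: stage_source_def stage_lower[OF m(1)] stage_upper[OF m(1)] stage_swap[OF m(1)]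
      stage_idle)

lemma sum_step:
  assumes "proper_matching m" "matching_on V m" shows "(\<Sum>u\<in>V. step m g u) = (\<Sum>u\<in>V. g u)"
proof -
  have "bij_betw (stage_source m g) V V"
    by (rule bij_betw_byWitness[where f' = "stage_source m g"])
      (auto simp: stage_source_involution stage_source_in assms)
  then show ?thesis by (simp add: step_eq_source[OF assms(1)] sum.reindex_bij_betw)
qed

text \<open>If columns of height \<open>n\<close> with \<open>c u\<close> ones are sorted, the column of the lower endpoint of
  a comparator upwards and that of the upper endpoint downwards, then the row comparators between
  them leave \<open>c u + c v - n\<close> and \<open>min n (c u + c v)\<close> ones.\<close>

definition merge_step :: "nat \<Rightarrow> 'a dmatching \<Rightarrow> ('a \<Rightarrow> nat) \<Rightarrow> 'a \<Rightarrow> nat" where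
  "merge_step n = stage (\<lambda>a b. a + b - n) (\<lambda>a b. min n (a + b))"

definition merge_run :: "nat \<Rightarrow> 'a dmatching list \<Rightarrow> ('a \<Rightarrow> nat) \<Rightarrow> 'a \<Rightarrow> nat" where
  "merge_run n M c = foldl (\<lambda>c m. merge_step n m c) c M"

lemma merge_run_Nil [simp]: "merge_run n [] c = c"
  by (simp add: merge_run_def)

lemma merge_run_Cons [simp]: "merge_run n (m # M) c = merge_run n M (merge_step n m c)"
  by (simp add: merge_run_def)

lemma merge_run_snoc: "merge_run n (M @ [m]) c = merge_step n m (merge_run n M c)"
  by (simp add: merge_run_def)

lemma merge_step_lower:
  "proper_matching m \<Longrightarrow> (p, q, True) \<in> m \<Longrightarrow> merge_step n m c p = c p + c q - n"
  by (simp add: merge_step_def stage_lower)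

lemma merge_step_upper:
  "proper_matching m \<Longrightarrow> (p, q, True) \<in> m \<Longrightarrow> merge_step n m c q = min n (c p + c q)"
  by (simp add: merge_step_def stage_upper add.commute)

lemma merge_step_swap:
  "proper_matching m \<Longrightarrow> (u, v, False) \<in> m \<or> (v, u, False) \<in> m \<Longrightarrow> merge_step n m c u = c v"
  by (simp add: merge_step_def stage_swap)

lemma merge_step_idle:
  "(\<And>v b. (u, v, b) \<notin> m \<and> (v, u, b) \<notin> m) \<Longrightarrow> merge_step n m c u = c u"
  by (simp add: merge_step_def stage_idle)

lemma merge_step_le:
  assumes m: "proper_matching m" and c: "\<forall>u. c u \<le> n" shows "merge_step n m c u \<le> n"
proof (cases u m rule: matching_cases)
  case (lower v)
  then show ?thesis using c[rule_format, of u] c[rule_format, of v]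
    by (simp add: merge_step_def stage_lower[OF m])
qed (use c in \<open>simp_all add: merge_step_def stage_upper[OF m] stage_swap[OF m] stage_idle\<close>)

lemma merge_run_le:
  "\<forall>m\<in>set M. proper_matching m \<Longrightarrow> \<forall>u. c u \<le> n \<Longrightarrow> merge_run n M c u \<le> n"
  by (induction M arbitrary: c) (simp_all add: merge_step_le)

definition balanced_layers :: "'a set \<Rightarrow> nat \<Rightarrow> (nat \<Rightarrow> 'a \<Rightarrow> nat) \<Rightarrow> bool" where
  "balanced_layers V n x \<longleftrightarrow> (\<exists>s. \<forall>k<n. (\<Sum>u\<in>V. x k u) \<in> {s, Suc s})"

lemma sum_of_bool_lessThan:
  fixes n :: nat
  assumes "A \<subseteq> {..<n}" shows "(\<Sum>k<n. of_bool (k \<in> A)) = (card A :: nat)"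
proof -
  have "(\<Sum>k<n. of_bool (k \<in> A)) = (of_nat (card ({..<n} \<inter> {k. k \<in> A})) :: nat)"
    by (rule sum_of_bool_eq) simp_all
  with assms show ?thesis by (simp add: Int_absorb1)
qed

lemma balanced_add_indicator:
  fixes S :: "nat \<Rightarrow> nat"
  assumes S: "\<forall>k<n. S k \<in> {s, Suc s}" and c: "c \<le> n"
  obtains A t where "A \<subseteq> {..<n}" "card A = c" "\<forall>k<n. S k + of_bool (k \<in> A) \<in> {t, Suc t}"
proof -
  define L where "L = {k. k < n \<and> S k = s}"
  have L: "L \<subseteq> {..<n}" "finite L" by (auto simp: L_def)
  show thesis
  proof (cases "c \<le> card L")
    case True
    then obtain A where "A \<subseteq> L" "card A = c" by (rule obtain_subset_with_card_n)
    moreover have "\<forall>k<n. S k + of_bool (k \<in> A) \<in> {s, Suc s}"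
      using S \<open>A \<subseteq> L\<close> unfolding L_def by auto
    ultimately show thesis using L by (intro that) auto
  next
    case False
    have "card ({..<n} - L) = n - card L" using L by (simp add: card_Diff_subset)
    then have "c - card L \<le> card ({..<n} - L)" using c by simp
    then obtain B where B: "B \<subseteq> {..<n} - L" "card B = c - card L"
      by (rule obtain_subset_with_card_n)
    have "card (L \<union> B) = c"
      using B False L by (subst card_Un_disjoint) (auto intro: finite_subset)
    moreover have "\<forall>k<n. S k + of_bool (k \<in> L \<union> B) \<in> {Suc s, Suc (Suc s)}"
      using S B unfolding L_def by auto
    ultimately show thesis using B L by (intro that) auto
  qed
qed

lemma balanced_layers_exist:
  assumes fin: "finite V" and c: "\<forall>u. c u \<le> n"
  shows "\<exists>x. (\<forall>k<n. \<forall>u. x k u \<le> 1) \<and> (\<forall>u. (\<Sum>k<n. x k u) = c u) \<and> balanced_layers V n x"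
  using fin
proof (induction V rule: finite_induct)
  case empty
  define x where "x k u = (of_bool (k < c u) :: nat)" for k u
  have "(\<Sum>k<n. x k u) = c u" for u
    using sum_of_bool_lessThan[of "{..<c u}" n] c by (auto simp: x_def)
  then show ?case by (intro exI[of _ x]) (auto simp: x_def balanced_layers_def)
next
  case (insert w F)
  obtain x where x01: "\<forall>k<n. \<forall>u. x k u \<le> 1" and x_sum: "\<forall>u. (\<Sum>k<n. x k u) = c u"
    and "balanced_layers F n x"
    using insert.IH by blast
  then obtain s where "\<forall>k<n. (\<Sum>u\<in>F. x k u) \<in> {s, Suc s}" unfolding balanced_layers_def by blast
  then obtain A t where A: "A \<subseteq> {..<n}" "card A = c w"
    and bal: "\<forall>k<n. (\<Sum>u\<in>F. x k u) + of_bool (k \<in> A) \<in> {t, Suc t}"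
    using c[rule_format, of w] by (rule balanced_add_indicator[where S = "\<lambda>k. \<Sum>u\<in>F. x k u"])
  define x' where "x' k u = (if u = w then of_bool (k \<in> A) else x k u)" for k u
  have "(\<Sum>u\<in>F. x' k u) = (\<Sum>u\<in>F. x k u)" for k
    using insert.hyps(2) by (intro sum.cong) (auto simp: x'_def)
  then have "(\<Sum>u\<in>insert w F. x' k u) = (\<Sum>u\<in>F. x k u) + of_bool (k \<in> A)" for k
    using insert.hyps by (simp add: x'_def)
  then have "balanced_layers (insert w F) n x'"
    using bal unfolding balanced_layers_def by (intro exI[of _ t]) simp
  moreover have "(\<Sum>k<n. x' k u) = c u" for u
    using x_sum sum_of_bool_lessThan[OF A(1)] A(2) by (cases "u = w") (simp_all add: x'_def)
  moreover have "\<forall>k<n. \<forall>u. x' k u \<le> 1" using x01 by (simp add: x'_def)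
  ultimately show ?case by blast
qed

lemma card_zero_one_eq_sum:
  fixes y :: "'i \<Rightarrow> nat"
  assumes "finite I" "\<forall>i\<in>I. y i \<le> 1" shows "card {i\<in>I. y i = 1} = (\<Sum>i\<in>I. y i)"
proof -
  have "(\<Sum>i\<in>I. y i) = (\<Sum>i\<in>I. of_bool (y i = 1))"
    using assms(2) by (intro sum.cong) (auto simp: le_Suc_eq)
  with assms(1) show ?thesis by (simp add: Int_def)
qed

lemma zero_one_sum_eq_card:
  fixes y :: "'i \<Rightarrow> nat"
  assumes "finite I" "\<forall>i\<in>I. y i \<le> 1" "(\<Sum>i\<in>I. y i) = card I" "k \<in> I" shows "y k = 1"
proof -
  have "card {i\<in>I. y i = 1} = card I" using card_zero_one_eq_sum[OF assms(1,2)] assms(3) by simp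
  then have "{i\<in>I. y i = 1} = I" using assms(1) by (intro card_subset_eq) auto
  with assms(4) show ?thesis by blast
qed

lemma layers_of_merged_pair:
  fixes y :: "nat \<Rightarrow> 'a \<Rightarrow> nat"
  assumes c: "c p \<le> n" "c q \<le> n" and y01: "\<forall>k<n. \<forall>u. y k u \<le> 1"
    and yp: "(\<Sum>k<n. y k p) = c p + c q - n" and yq: "(\<Sum>k<n. y k q) = min n (c p + c q)"
  shows "\<forall>k<n. y k p = 1 \<longrightarrow> y k q = 1"
    and "\<exists>A. A \<subseteq> {k. k < n \<and> y k p = 0 \<and> y k q = 1} \<and> card A = c p - (c p + c q - n)"
proof -
  show mono: "\<forall>k<n. y k p = 1 \<longrightarrow> y k q = 1"
  proof (intro allI impI)
    fix k assume k: "k < n" and "y k p = 1"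
    then have "1 \<le> (\<Sum>k<n. y k p)" using member_le_sum[of k "{..<n}" "\<lambda>k. y k p"] by simp
    then have "(\<Sum>k<n. y k q) = card {..<n}" using yp yq by simp
    then show "y k q = 1" by (rule zero_one_sum_eq_card[rotated 2]) (use y01 k in auto)
  qed
  have ones: "card {k\<in>{..<n}. y k u = 1} = (\<Sum>k<n. y k u)" for u
    using y01 by (intro card_zero_one_eq_sum) auto
  have "{k\<in>{..<n}. y k q = 1} = {k\<in>{..<n}. y k p = 1} \<union> {k. k < n \<and> y k p = 0 \<and> y k q = 1}"
    using mono y01 by (auto simp: le_Suc_eq)
  moreover have "card ({k\<in>{..<n}. y k p = 1} \<union> {k. k < n \<and> y k p = 0 \<and> y k q = 1})
      = card {k\<in>{..<n}. y k p = 1} + card {k. k < n \<and> y k p = 0 \<and> y k q = 1}"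
    by (rule card_Un_disjoint) auto
  ultimately have "card {k. k < n \<and> y k p = 0 \<and> y k q = 1} = (\<Sum>k<n. y k q) - (\<Sum>k<n. y k p)"
    using ones[of p] ones[of q] by simp
  then have "c p - (c p + c q - n) \<le> card {k. k < n \<and> y k p = 0 \<and> y k q = 1}"
    using yp yq c by (cases "n \<le> c p + c q") (simp_all add: min_def)
  then show "\<exists>A. A \<subseteq> {k. k < n \<and> y k p = 0 \<and> y k q = 1} \<and> card A = c p - (c p + c q - n)"
    by (meson obtain_subset_with_card_n)
qed

text \<open>Undoing a merge step on layers: for each comparator \<open>(p, q)\<close>, the layers in \<open>A p q\<close>
  give their one in \<open>q\<close> back to \<open>p\<close>, and the stage moves it to \<open>q\<close> again.\<close>

context
  fixes n :: nat and m :: "'a dmatching" and c :: "'a \<Rightarrow> nat"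
    and y :: "nat \<Rightarrow> 'a \<Rightarrow> nat" and A :: "'a \<Rightarrow> 'a \<Rightarrow> nat set"
  assumes proper: "proper_matching m" and c_le: "\<forall>u. c u \<le> n"
    and y01: "\<forall>k<n. \<forall>u. y k u \<le> 1" and y_sum: "\<forall>u. (\<Sum>k<n. y k u) = merge_step n m c u"
    and A: "\<And>p q. (p, q, True) \<in> m \<Longrightarrow>
      A p q \<subseteq> {k. k < n \<and> y k p = 0 \<and> y k q = 1} \<and> card (A p q) = c p - merge_step n m c p"
begin

definition unmerged_layer :: "nat \<Rightarrow> 'a \<Rightarrow> nat" where
  "unmerged_layer k u = snd (stage (\<lambda>a b. (fst a, snd a + of_bool (k \<in> A (fst a) (fst b))))
     (\<lambda>a b. (fst a, snd a - of_bool (k \<in> A (fst b) (fst a)))) m (\<lambda>w. (w, y k w)) u)"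

lemma unmerged_layer_lower: "(u, v, True) \<in> m \<Longrightarrow> unmerged_layer k u = y k u + of_bool (k \<in> A u v)"
  by (simp add: unmerged_layer_def stage_lower[OF proper])

lemma unmerged_layer_upper: "(v, u, True) \<in> m \<Longrightarrow> unmerged_layer k u = y k u - of_bool (k \<in> A v u)"
  by (simp add: unmerged_layer_def stage_upper[OF proper])

lemma unmerged_layer_swap: "(u, v, False) \<in> m \<or> (v, u, False) \<in> m \<Longrightarrow> unmerged_layer k u = y k v"
  by (simp add: unmerged_layer_def stage_swap[OF proper])

lemma unmerged_layer_idle: "(\<And>v b. (u, v, b) \<notin> m \<and> (v, u, b) \<notin> m) \<Longrightarrow> unmerged_layer k u = y k u"
  by (simp add: unmerged_layer_def stage_idle)

lemma layer_mono_on_comparator: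
  assumes e: "(p, q, True) \<in> m" and k: "k < n" shows "y k p \<le> y k q"
proof -
  have "\<forall>k<n. y k p = 1 \<longrightarrow> y k q = 1"
    by (rule layers_of_merged_pair(1))
      (use c_le y01 y_sum merge_step_lower[OF proper e] merge_step_upper[OF proper e] in auto)
  then have "y k p = 1 \<Longrightarrow> y k q = 1" using k by blast
  moreover have "y k p \<le> 1" using y01 k by blast
  ultimately show ?thesis by (cases "y k p = 1") auto
qed

lemma step_unmerged_layer:
  assumes k: "k < n" shows "step m (unmerged_layer k) u = y k u"
proof (cases u m rule: matching_cases)
  case (lower v)
  have "step m (unmerged_layer k) u = min (y k u + of_bool (k \<in> A u v)) (y k v - of_bool (k \<in> A u v))"
    unfolding step_eq_stage stage_lower[OF proper lower] unmerged_layer_lower[OF lower]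
      unmerged_layer_upper[OF lower] ..
  moreover have "y k u \<le> y k v" using layer_mono_on_comparator[OF lower k] .
  moreover have "k \<in> A u v \<Longrightarrow> y k u = 0 \<and> y k v = 1" using A[OF lower] by auto
  ultimately show ?thesis by (cases "k \<in> A u v") simp_all
next
  case (upper v)
  have "step m (unmerged_layer k) u = max (y k u - of_bool (k \<in> A v u)) (y k v + of_bool (k \<in> A v u))"
    unfolding step_eq_stage stage_upper[OF proper upper] unmerged_layer_lower[OF upper]
      unmerged_layer_upper[OF upper] ..
  moreover have "y k v \<le> y k u" using layer_mono_on_comparator[OF upper k] .
  moreover have "k \<in> A v u \<Longrightarrow> y k v = 0 \<and> y k u = 1" using A[OF upper] by auto
  ultimately show ?thesis by (cases "k \<in> A v u") simp_all
next
  case (swap v)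
  moreover have "(v, u, False) \<in> m \<or> (u, v, False) \<in> m" using swap by blast
  ultimately show ?thesis by (simp add: step_eq_stage stage_swap[OF proper] unmerged_layer_swap)
next
  case idle
  then show ?thesis by (simp add: step_eq_stage stage_idle unmerged_layer_idle)
qed

lemma unmerged_layer_le_1:
  assumes k: "k < n" shows "unmerged_layer k u \<le> 1"
proof (cases u m rule: matching_cases)
  case (lower v)
  then show ?thesis using A[OF lower] y01 k by (auto simp: unmerged_layer_lower)
next
  case (upper v)
  have "y k u \<le> 1" using y01 k by blast
  then show ?thesis by (simp add: unmerged_layer_upper[OF upper])
next
  case (swap v)
  then show ?thesis using y01 k by (simp add: unmerged_layer_swap)
next
  case idle
  then show ?thesis using y01 k by (simp add: unmerged_layer_idle)
qed

lemma sum_unmerged_layers: "(\<Sum>k<n. unmerged_layer k u) = c u"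
proof (cases u m rule: matching_cases)
  case (lower v)
  have "(\<Sum>k<n. unmerged_layer k u) = (\<Sum>k<n. y k u) + (\<Sum>k<n. of_bool (k \<in> A u v))"
    unfolding unmerged_layer_lower[OF lower] by (rule sum.distrib)
  also have "\<dots> = merge_step n m c u + (c u - merge_step n m c u)"
    using A[OF lower] y_sum sum_of_bool_lessThan[of "A u v" n] by auto
  also have "\<dots> = c u"
    using merge_step_lower[OF proper lower] c_le[rule_format, of v] by simp
  finally show ?thesis .
next
  case (upper v)
  have le: "of_bool (k \<in> A v u) \<le> y k u" if "k < n" for k using A[OF upper] that by auto
  have "(\<Sum>k<n. unmerged_layer k u) = (\<Sum>k<n. y k u) - (\<Sum>k<n. of_bool (k \<in> A v u))"
    unfolding unmerged_layer_upper[OF upper] by (rule sum_subtractf_nat) (use le in simp)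
  also have "\<dots> = merge_step n m c u - (c v - merge_step n m c v)"
    using A[OF upper] y_sum sum_of_bool_lessThan[of "A v u" n] by (simp add: subset_iff)
  also have "\<dots> = c u"
    using merge_step_lower[OF proper upper] merge_step_upper[OF proper upper]
      c_le[rule_format, of u] c_le[rule_format, of v]
    by (cases "n \<le> c v + c u") (simp_all add: min_def)
  finally show ?thesis .
next
  case (swap v)
  moreover have "(v, u, False) \<in> m \<or> (u, v, False) \<in> m" using swap by blast
  ultimately show ?thesis using y_sum by (simp add: unmerged_layer_swap merge_step_swap[OF proper])
next
  case idle
  then show ?thesis using y_sum by (simp add: unmerged_layer_idle merge_step_idle)
qed

end

lemma layers_before_merge_step:
  assumes proper: "proper_matching m" and c_le: "\<forall>u. c u \<le> n"
    and y01: "\<forall>k<n. \<forall>u. y k u \<le> 1" and y_sum: "\<forall>u. (\<Sum>k<n. y k u) = merge_step n m c u"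
  obtains x where "\<forall>k<n. \<forall>u. x k u \<le> 1" "\<forall>u. (\<Sum>k<n. x k u) = c u" "\<forall>k<n. step m (x k) = y k"
proof -
  define A where "A p q = (SOME B. B \<subseteq> {k. k < n \<and> y k p = 0 \<and> y k q = 1} \<and>
    card B = c p - merge_step n m c p)" for p q
  have A: "A p q \<subseteq> {k. k < n \<and> y k p = 0 \<and> y k q = 1} \<and> card (A p q) = c p - merge_step n m c p"
    if e: "(p, q, True) \<in> m" for p q
    unfolding A_def
  proof (rule someI_ex)
    show "\<exists>B. B \<subseteq> {k. k < n \<and> y k p = 0 \<and> y k q = 1} \<and> card B = c p - merge_step n m c p"
      unfolding merge_step_lower[OF proper e]
      by (rule layers_of_merged_pair(2))
        (use c_le y01 y_sum merge_step_lower[OF proper e] merge_step_upper[OF proper e] in auto)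
  qed
  note unmerged = unmerged_layer_le_1 sum_unmerged_layers step_unmerged_layer
  show thesis
    by (rule that[of "unmerged_layer m y A"]) (use unmerged[OF assms A] in auto)
qed

lemma merge_run_eq_sum_layers:
  assumes M: "\<forall>m\<in>set M. proper_matching m \<and> matching_on V m" and fin: "finite V"
    and c: "\<forall>u. c u \<le> n"
  shows "\<exists>x. (\<forall>k<n. \<forall>u. x k u \<le> 1) \<and> (\<forall>u. (\<Sum>k<n. x k u) = c u) \<and> balanced_layers V n x \<and>
             (\<forall>u. merge_run n M c u = (\<Sum>k<n. run M (x k) u))"
  using M c
proof (induction M arbitrary: c)
  case Nil
  then obtain x where "\<forall>k<n. \<forall>u. x k u \<le> 1" "\<forall>u. (\<Sum>k<n. x k u) = c u" "balanced_layers V n x"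
    using balanced_layers_exist[OF fin] by blast
  then show ?case by (intro exI[of _ x]) simp
next
  case (Cons m M)
  have m: "proper_matching m" "matching_on V m" using Cons.prems by auto
  have "\<forall>u. merge_step n m c u \<le> n" using merge_step_le[OF m(1)] Cons.prems(2) by blast
  then obtain y where y01: "\<forall>k<n. \<forall>u. y k u \<le> 1" and y_sum: "\<forall>u. (\<Sum>k<n. y k u) = merge_step n m c u"
    and y_bal: "balanced_layers V n y" and y_run: "\<forall>u. merge_run n M (merge_step n m c) u = (\<Sum>k<n. run M (y k) u)"
    using Cons.IH[of "merge_step n m c"] Cons.prems(1) by (auto simp del: merge_run_Cons)
  obtain x where x01: "\<forall>k<n. \<forall>u. x k u \<le> 1" and x_sum: "\<forall>u. (\<Sum>k<n. x k u) = c u"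
    and x_step: "\<forall>k<n. step m (x k) = y k"
    using layers_before_merge_step[OF m(1) Cons.prems(2) y01 y_sum] .
  have "(\<Sum>u\<in>V. x k u) = (\<Sum>u\<in>V. y k u)" if "k < n" for k
    using sum_step[OF m, of "x k"] x_step that by simp
  then have "balanced_layers V n x" using y_bal unfolding balanced_layers_def by simp
  moreover have "merge_run n (m # M) c u = (\<Sum>k<n. run (m # M) (x k) u)" for u
    using y_run x_step by (auto intro: sum.cong)
  ultimately show ?case using x01 x_sum by blast
qed

lemma rank_threshold_arith:
  fixes n1 n2 s t \<rho> r N C :: nat
  assumes N: "N = n2 * s + t" and t: "t < n2" and s: "s \<le> n1" and ts: "0 < t \<longrightarrow> s < n1"
    and \<rho>: "1 \<le> \<rho>" "\<rho> \<le> n1" and r: "1 \<le> r" "r \<le> n2"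
    and C: "C = (if n1 - s < \<rho> then n2 else if n1 - s = \<rho> then t else 0)"
  shows "n2 - C < r \<longleftrightarrow> n1 * n2 - N < (\<rho> - 1) * n2 + r"
proof -
  obtain a where a: "n1 = a + s" using s by (metis le_add_diff_inverse2)
  obtain p where p: "\<rho> = Suc p" using \<rho>(1) by (cases \<rho>) auto
  have lhs: "n1 * n2 - N = a * n2 - t" using a N by (simp add: algebra_simps)
  have "n2 - C < r \<longleftrightarrow> a * n2 - t < p * n2 + r"
  proof (cases "a < \<rho>")
    case True
    then have "a * n2 \<le> p * n2" using p by simp
    moreover have "C = n2" using True C a by simp
    ultimately show ?thesis using r by linarith
  next
    case False
    show ?thesis
    proof (cases "a = \<rho>")
      case True
      then have "a * n2 = p * n2 + n2" using p by simp
      moreover have "C = t" using True False C a by simp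
      ultimately show ?thesis using r t by linarith
    next
      case False2: False
      then have "Suc p < a" using False p by simp
      then obtain q where "a = Suc (Suc (p + q))" by (metis Suc_lessE add_Suc_right less_imp_Suc_add)
      then have "a * n2 = p * n2 + q * n2 + 2 * n2" by (simp add: algebra_simps)
      moreover have "C = 0" using False False2 C a by simp
      ultimately show ?thesis using r t by linarith
    qed
  qed
  then show ?thesis unfolding lhs p by simp
qed

lemma nearly_constant_normal_form:
  fixes S :: "nat \<Rightarrow> nat"
  assumes S: "\<forall>k<n. S k \<in> {s0, Suc s0}" and n: "0 < n"
  obtains T s where "T \<subseteq> {..<n}" "card T < n" "\<And>k. k < n \<Longrightarrow> S k = s + of_bool (k \<in> T)"
proof (cases "card {k. k < n \<and> S k = Suc s0} < n")
  case True
  then show ?thesis using S by (intro that[of "{k. k < n \<and> S k = Suc s0}" s0]) auto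
next
  case False
  have "card {k. k < n \<and> S k = Suc s0} \<le> card {..<n}" by (rule card_mono) auto
  with False have "{k. k < n \<and> S k = Suc s0} = {..<n}"
    by (intro card_subset_eq) auto
  then show ?thesis using n by (intro that[of "{}" "Suc s0"]) auto
qed

lemma sum_threshold_nearly_constant:
  fixes S :: "nat \<Rightarrow> nat"
  assumes T: "T \<subseteq> {..<n}" and S: "\<And>k. k < n \<Longrightarrow> S k = s + of_bool (k \<in> T)" and \<rho>: "1 \<le> \<rho>"
  shows "(\<Sum>k<n. if m - S k < \<rho> then 1 else 0) = (if m - s < \<rho> then n else if m - s = \<rho> then card T else 0)"
proof -
  consider "m - s < \<rho>" | "m - s = \<rho>" | "\<rho> < m - s" by linarith
  then show ?thesis
  proof cases
    case 1
    then have "(\<Sum>k<n. if m - S k < \<rho> then 1 else 0) = (\<Sum>k<n. 1::nat)"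
      using S by (intro sum.cong) auto
    with 1 show ?thesis by simp
  next
    case 2
    then have "(\<Sum>k<n. if m - S k < \<rho> then 1 else 0) = (\<Sum>k<n. of_bool (k \<in> T) :: nat)"
      using S \<rho> by (intro sum.cong) auto
    with 2 show ?thesis using sum_of_bool_lessThan[OF T] by simp
  next
    case 3
    then have "(\<Sum>k<n. if m - S k < \<rho> then 1 else 0) = (\<Sum>k<n. 0::nat)"
      using S by (intro sum.cong) auto
    with 3 show ?thesis by simp
  qed
qed

text \<open>Sort each of \<open>n2\<close> layers with \<open>S k \<le> n1\<close> ones by rank among \<open>n1\<close> rows, and then
  sort the resulting counts in a column of height \<open>n2\<close>. If the layer sizes are balanced, the
  one at row rank \<open>\<rho>\<close> and column rank \<open>r\<close> sits exactly above the global threshold.\<close>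

lemma balanced_layers_threshold:
  fixes S :: "nat \<Rightarrow> nat"
  assumes bal: "\<forall>k<n2. S k \<in> {s0, Suc s0}" and S_le: "\<forall>k<n2. S k \<le> n1"
    and \<rho>: "1 \<le> \<rho>" "\<rho> \<le> n1" and r: "1 \<le> r" "r \<le> n2"
  shows "n2 - (\<Sum>k<n2. if n1 - S k < \<rho> then 1 else 0) < r \<longleftrightarrow> n1 * n2 - (\<Sum>k<n2. S k) < (\<rho> - 1) * n2 + r"
proof -
  have "0 < n2" using r by simp
  obtain T s where T: "T \<subseteq> {..<n2}" "card T < n2"
    and S: "\<And>k. k < n2 \<Longrightarrow> S k = s + of_bool (k \<in> T)"
    using nearly_constant_normal_form[OF bal \<open>0 < n2\<close>] by blast
  have N: "(\<Sum>k<n2. S k) = n2 * s + card T"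
    using S sum_of_bool_lessThan[OF T(1)] by (simp add: sum.distrib)
  have s: "s \<le> n1" using S_le S[of 0] r by auto
  have ts: "0 < card T \<longrightarrow> s < n1"
  proof
    assume "0 < card T"
    then obtain k where "k \<in> T" by (auto simp: card_gt_0_iff)
    then have "k < n2" using T(1) by auto
    with \<open>k \<in> T\<close> show "s < n1" using S_le S[of k] by auto
  qed
  show ?thesis
    by (rule rank_threshold_arith[OF N T(2) s ts \<rho> r sum_threshold_nearly_constant[OF T(1) S \<rho>(1)]])
qed

lemma card_interval_ranks: "b \<le> n \<Longrightarrow> card {k\<in>{1..n}. a < k \<and> k \<le> (b::nat)} = b - a"
proof -
  assume "b \<le> n"
  then have "{k\<in>{1..n}. a < k \<and> k \<le> b} = {a<..b}" by auto
  then show ?thesis by simp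
qed

lemma card_top_ranks: "c \<le> n \<Longrightarrow> card {k\<in>{1..n}. n - c < (k::nat)} = c"
proof -
  assume "c \<le> n"
  then have "{k\<in>{1..n}. n - c < k} = {n - c<..n}" by auto
  with \<open>c \<le> n\<close> show ?thesis by simp
qed

lemma card_bottom_ranks: "c \<le> n \<Longrightarrow> card {k\<in>{1..n}. (k::nat) \<le> c} = c"
proof -
  assume "c \<le> n"
  then have "{k\<in>{1..n}. k \<le> c} = {1..c}" by auto
  then show ?thesis by simp
qed

lemma card_bottom_or_top_ranks:
  assumes "a \<le> n" "b \<le> (n::nat)" shows "card {k\<in>{1..n}. k \<le> a \<or> n - b < k} = min n (a + b)"
proof -
  have "{k\<in>{1..n}. k \<le> a \<or> n - b < k} = {1..n} - {k\<in>{1..n}. a < k \<and> k \<le> n - b}" by auto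
  moreover have "card ({1..n} - {k\<in>{1..n}. a < k \<and> k \<le> n - b})
      = card {1..n} - card {k\<in>{1..n}. a < k \<and> k \<le> n - b}"
    by (rule card_Diff_subset) auto
  ultimately have "card {k\<in>{1..n}. k \<le> a \<or> n - b < k} = n - card {k\<in>{1..n}. a < k \<and> k \<le> n - b}"
    by simp
  also have "\<dots> = n - (n - b - a)" using card_interval_ranks[of "n - b" n a] by simp
  finally show ?thesis using assms by simp
qed

section \<open>The product network\<close>

locale product_of_sorting_networks =
  fixes V1 :: "'a set" and V2 :: "'b set" and M1 :: "'a dmatching list" and M2 :: "'b dmatching list"
    and \<pi>1 :: "'a \<Rightarrow> nat" and \<pi>2 :: "'b \<Rightarrow> nat"
  assumes finite_V1: "finite V1" and finite_V2: "finite V2"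
    and M1: "\<forall>m\<in>set M1. proper_matching m \<and> matching_on V1 m"
    and M2: "\<forall>m\<in>set M2. proper_matching m \<and> matching_on V2 m"
    and M1_sorts: "\<forall>f. bij_betw f V1 {1..card V1} \<longrightarrow> (\<forall>x\<in>V1. run M1 f x = \<pi>1 x)"
    and M2_sorts: "\<forall>f. bij_betw f V2 {1..card V2} \<longrightarrow> (\<forall>x\<in>V2. run M2 f x = \<pi>2 x)"
    and \<pi>1: "bij_betw \<pi>1 V1 {1..card V1}" and \<pi>2: "bij_betw \<pi>2 V2 {1..card V2}"
begin

abbreviation "n1 \<equiv> card V1"
abbreviation "n2 \<equiv> card V2"

text \<open>Rows are the copies \<open>V1 \<times> {x}\<close> of \<open>G1\<close>, columns the copies \<open>{u} \<times> V2\<close> of \<open>G2\<close>.\<close>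

definition column_phase :: "('a \<Rightarrow> bool) \<Rightarrow> ('a \<times> 'b) dmatching list" where
  "column_phase up = map (\<lambda>m. parallel V1 Pair (\<lambda>u. if up u then m else reverse_matching m)) M2"

definition row_stage :: "'a dmatching \<Rightarrow> ('a \<times> 'b) dmatching" where
  "row_stage m = parallel V2 (\<lambda>x v. (v, x)) (\<lambda>x. m)"

text \<open>Before row stage \<open>i\<close>, a column is sorted upwards iff it is the lower end of a comparator of
  that stage; after the last stage all columns are sorted upwards.\<close>

definition upward :: "nat \<Rightarrow> 'a \<Rightarrow> bool" where
  "upward i u = (if i < length M1 then \<exists>v. (u, v, True) \<in> M1 ! i else True)"

definition column_ones :: "('a \<times> 'b \<Rightarrow> nat) \<Rightarrow> 'a \<Rightarrow> nat" where
  "column_ones F u = card {x\<in>V2. F (u, x) = 1}"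

definition columns_sorted :: "('a \<Rightarrow> bool) \<Rightarrow> ('a \<Rightarrow> nat) \<Rightarrow> ('a \<times> 'b \<Rightarrow> nat) \<Rightarrow> bool" where
  "columns_sorted up c F \<longleftrightarrow> (\<forall>u\<in>V1. \<forall>x\<in>V2. F (u, x) =
     (if up u then (if n2 - c u < \<pi>2 x then 1 else 0) else (if \<pi>2 x \<le> c u then 1 else 0)))"

lemma disjoint_columns: "disjoint_copies V1 Pair"
  by (simp add: disjoint_copies_def)

lemma disjoint_rows: "disjoint_copies V2 (\<lambda>x v. (v, x))"
  by (simp add: disjoint_copies_def)

lemma column_ones_le: "column_ones F u \<le> n2"
  unfolding column_ones_def using finite_V2 by (intro card_mono) auto

lemma card_column_ranks: "card {x\<in>V2. P (\<pi>2 x)} = card {k\<in>{1..n2}. P k}"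
  by (rule card_filter_bij[OF \<pi>2])

lemma column_ones_eq_card_ranks:
  assumes "\<And>x. x \<in> V2 \<Longrightarrow> F (u, x) = 1 \<longleftrightarrow> P (\<pi>2 x)"
  shows "column_ones F u = card {k\<in>{1..n2}. P k}"
proof -
  have "column_ones F u = card {x\<in>V2. P (\<pi>2 x)}"
    unfolding column_ones_def using assms by (intro arg_cong[where f = card]) auto
  then show ?thesis using card_column_ranks by simp
qed

lemma run_column_phase:
  assumes zero_one: "\<forall>z. F z \<le> (1::nat)" and u: "u \<in> V1" and x: "x \<in> V2"
  shows "run (column_phase up) F (u, x) =
     (if up u then (if n2 - column_ones F u < \<pi>2 x then 1 else 0) else (if \<pi>2 x \<le> column_ones F u then 1 else 0))"
proof -
  have "\<forall>m\<in>set M2. \<forall>u\<in>V1. proper_matching (if up u then m else reverse_matching m)"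
    using M2 proper_matching_reverse by auto
  then have "run (column_phase up) F (u, x)
      = run (map (\<lambda>m. if up u then m else reverse_matching m) M2) (\<lambda>y. F (u, y)) x"
    unfolding column_phase_def using run_parallel[OF disjoint_columns _ u, of M2 "\<lambda>u m. if up u then m else reverse_matching m"] by simp
  also have "\<dots> = (if up u then (if n2 - column_ones F u < \<pi>2 x then 1 else 0)
      else (if \<pi>2 x \<le> column_ones F u then 1 else 0))"
  proof (cases "up u")
    case True
    then show ?thesis
      using sorting_run_zero_one[OF finite_V2 M2_sorts _ x, of "\<lambda>y. F (u, y)"] zero_one
      by (simp add: column_ones_def)
  next
    case False
    have F: "\<forall>y. F (u, y) \<le> 1" using zero_one by simp
    have "F (u, y) = 0 \<or> F (u, y) = 1" for y using F by (auto simp: le_Suc_eq)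
    then have "{y\<in>V2. 1 - F (u, y) = 1} = V2 - {y\<in>V2. F (u, y) = 1}" by force
    then have "card {y\<in>V2. 1 - F (u, y) = 1} = n2 - column_ones F u"
      unfolding column_ones_def using finite_V2 by (simp add: card_Diff_subset)
    then have "run M2 (\<lambda>y. 1 - F (u, y)) x = (if n2 - (n2 - column_ones F u) < \<pi>2 x then 1 else 0)"
      using sorting_run_zero_one[OF finite_V2 M2_sorts _ x, of "\<lambda>y. 1 - F (u, y)"] by simp
    then have "run (map reverse_matching M2) (\<lambda>y. F (u, y)) x = (if \<pi>2 x \<le> column_ones F u then 1 else 0)"
      using run_reverse_matching[OF _ F, of M2 x] M2 column_ones_le[of F u] by auto
    with False show ?thesis by simp
  qed
  finally show ?thesis .
qed

lemma columns_sorted_column_phase: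
  "\<forall>z. F z \<le> (1::nat) \<Longrightarrow> columns_sorted up (column_ones F) (run (column_phase up) F)"
  unfolding columns_sorted_def using run_column_phase by simp

lemma column_ones_sorted:
  assumes sorted: "columns_sorted up c F" and c: "c u \<le> n2" and u: "u \<in> V1"
  shows "column_ones F u = c u"
proof (cases "up u")
  case True
  then have "column_ones F u = card {k\<in>{1..n2}. n2 - c u < k}"
    using sorted u unfolding columns_sorted_def by (intro column_ones_eq_card_ranks) simp
  then show ?thesis using card_top_ranks[OF c] by simp
next
  case False
  then have "column_ones F u = card {k\<in>{1..n2}. k \<le> c u}"
    using sorted u unfolding columns_sorted_def by (intro column_ones_eq_card_ranks) simp
  then show ?thesis using card_bottom_ranks[OF c] by simp
qed

end

context product_of_sorting_networks
begin

lemma step_row_stage: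
  assumes "proper_matching m" "x \<in> V2" shows "step (row_stage m) F (u, x) = step m (\<lambda>v. F (v, x)) u"
  unfolding row_stage_def step_eq_stage using stage_parallel[OF disjoint_rows _ assms(2), of "\<lambda>x. m"] assms(1)
  by simp

lemma column_ones_row_stage:
  assumes i: "i < length M1" and sorted: "columns_sorted (upward i) c F"
    and c: "\<forall>u. c u \<le> n2" and u: "u \<in> V1"
  shows "column_ones (step (row_stage (M1 ! i)) F) u = merge_step n2 (M1 ! i) c u"
proof -
  define m where "m = M1 ! i"
  have m: "proper_matching m" "matching_on V1 m" using M1 i unfolding m_def by auto
  define G where "G = step (row_stage m) F"
  have G: "G (u, x) = step m (\<lambda>v. F (v, x)) u" if "x \<in> V2" for x
    unfolding G_def using step_row_stage[OF m(1) that] .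
  have F: "F (v, x) = (if upward i v then (if n2 - c v < \<pi>2 x then 1 else 0)
      else (if \<pi>2 x \<le> c v then 1 else 0))" if "v \<in> V1" "x \<in> V2" for v x
    using sorted that unfolding columns_sorted_def by simp
  have upward: "upward i v \<longleftrightarrow> (\<exists>w. (v, w, True) \<in> m)" for v
    unfolding upward_def m_def using i by simp
  have "column_ones G u = merge_step n2 m c u"
  proof (cases u m rule: matching_cases)
    case (lower v)
    have "v \<in> V1" using m(2) lower unfolding matching_on_def by blast
    moreover have "upward i u" "\<not> upward i v"
      using upward lower proper_matching_same_edge[OF m(1) lower, of v]
        proper_matching_no_loop[OF m(1) lower]
      by auto
    ultimately have "column_ones G u = card {k\<in>{1..n2}. n2 - c u < k \<and> k \<le> c v}"
      using G F u by (intro column_ones_eq_card_ranks)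
        (simp add: step_eq_stage stage_lower[OF m(1) lower] min_def)
    then show ?thesis
      using card_interval_ranks[of "c v" n2 "n2 - c u"] merge_step_lower[OF m(1) lower] c by simp
  next
    case (upper v)
    have "v \<in> V1" using m(2) upper unfolding matching_on_def by blast
    moreover have "upward i v" "\<not> upward i u"
      using upward upper proper_matching_same_edge[OF m(1) upper, of u]
        proper_matching_no_loop[OF m(1) upper]
      by auto
    ultimately have "column_ones G u = card {k\<in>{1..n2}. k \<le> c u \<or> n2 - c v < k}"
      using G F u by (intro column_ones_eq_card_ranks)
        (simp add: step_eq_stage stage_upper[OF m(1) upper] max_def)
    then show ?thesis
      using card_bottom_or_top_ranks[of "c u" n2 "c v"] merge_step_upper[OF m(1) upper] c
      by (simp add: add.commute)
  next
    case (swap v)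
    have "v \<in> V1" using m(2) swap unfolding matching_on_def by blast
    moreover have "column_ones G u = column_ones F v"
      using G unfolding column_ones_def step_eq_stage stage_swap[OF m(1) swap]
      by (intro arg_cong[where f = card]) auto
    ultimately show ?thesis
      using column_ones_sorted[OF sorted] merge_step_swap[OF m(1) swap] c by simp
  next
    case idle
    have "column_ones G u = column_ones F u"
      using G unfolding column_ones_def step_eq_stage stage_idle[OF idle]
      by (intro arg_cong[where f = card]) auto
    then show ?thesis using column_ones_sorted[OF sorted _ u] merge_step_idle[OF idle] c by simp
  qed
  then show ?thesis unfolding G_def m_def .
qed

definition network_prefix :: "nat \<Rightarrow> ('a \<times> 'b) dmatching list" where
  "network_prefix i = column_phase (upward 0) @
     concat (map (\<lambda>j. row_stage (M1 ! j) # column_phase (upward (Suc j))) [0..<i])"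

definition product_network :: "('a \<times> 'b) dmatching list" where
  "product_network = network_prefix (length M1)"

definition product_rank :: "'a \<times> 'b \<Rightarrow> nat" where
  "product_rank = (\<lambda>(u, x). (\<pi>1 u - 1) * n2 + \<pi>2 x)"

lemma network_prefix_Suc:
  "network_prefix (Suc i) = network_prefix i @ row_stage (M1 ! i) # column_phase (upward (Suc i))"
  by (simp add: network_prefix_def)

lemma columns_sorted_network_prefix:
  assumes "i \<le> length M1" and zero_one: "\<forall>z. h z \<le> (1::nat)"
  shows "columns_sorted (upward i) (merge_run n2 (take i M1) (column_ones h)) (run (network_prefix i) h)"
  using assms(1)
proof (induction i)
  case 0
  then show ?case using columns_sorted_column_phase[OF zero_one] by (simp add: network_prefix_def)
next
  case (Suc i)
  define c where "c = merge_run n2 (take i M1) (column_ones h)"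
  define G where "G = step (row_stage (M1 ! i)) (run (network_prefix i) h)"
  have sorted: "columns_sorted (upward i) c (run (network_prefix i) h)"
    using Suc by (simp add: c_def)
  have G01: "\<forall>z. G z \<le> 1" unfolding G_def by (intro allI step_le_bound run_le_bound zero_one)
  have c: "\<forall>u. c u \<le> n2"
    unfolding c_def using M1 by (intro allI merge_run_le) (auto dest: in_set_takeD simp: column_ones_le)
  have "column_ones G u = merge_run n2 (take (Suc i) M1) (column_ones h) u" if "u \<in> V1" for u
    using column_ones_row_stage[OF _ sorted c that] Suc.prems
    by (simp add: G_def c_def take_Suc_conv_app_nth merge_run_snoc)
  then have "columns_sorted (upward (Suc i)) (merge_run n2 (take (Suc i) M1) (column_ones h))
      (run (column_phase (upward (Suc i))) G)"
    using columns_sorted_column_phase[OF G01] unfolding columns_sorted_def by simp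
  then show ?case by (simp add: network_prefix_Suc run_append G_def)
qed

lemma run_product_network_merge_run:
  assumes "\<forall>z. h z \<le> (1::nat)" "u \<in> V1" "x \<in> V2"
  shows "run product_network h (u, x) = (if n2 - merge_run n2 M1 (column_ones h) u < \<pi>2 x then 1 else 0)"
  using columns_sorted_network_prefix[OF order_refl assms(1)] assms(2,3)
  unfolding product_network_def columns_sorted_def upward_def by simp

lemma product_rank_bounds:
  assumes "u \<in> V1" "x \<in> V2" shows "1 \<le> product_rank (u, x)" "product_rank (u, x) \<le> n1 * n2"
proof -
  have \<rho>: "1 \<le> \<pi>1 u" "\<pi>1 u \<le> n1" and r: "1 \<le> \<pi>2 x" "\<pi>2 x \<le> n2"
    using bij_betwE[OF \<pi>1] bij_betwE[OF \<pi>2] assms by auto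
  show "1 \<le> product_rank (u, x)" using r by (simp add: product_rank_def)
  have "(\<pi>1 u - 1) * n2 + n2 \<le> n1 * n2"
    using \<rho> mult_le_mono1[of "\<pi>1 u" n1 n2] by (cases "\<pi>1 u") auto
  then show "product_rank (u, x) \<le> n1 * n2" using r by (simp add: product_rank_def)
qed

lemma product_network_zero_one:
  assumes zero_one: "\<forall>z. h z \<le> (1::nat)" and u: "u \<in> V1" and x: "x \<in> V2"
  shows "run product_network h (u, x) =
    (if n1 * n2 - card {z\<in>V1 \<times> V2. h z = 1} < product_rank (u, x) then 1 else 0)"
proof -
  have "\<forall>u. column_ones h u \<le> n2" using column_ones_le by blast
  then obtain X where X01: "\<forall>k<n2. \<forall>u. X k u \<le> 1" and X_sum: "\<forall>u. (\<Sum>k<n2. X k u) = column_ones h u"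
    and "balanced_layers V1 n2 X" and X_run: "\<forall>u. merge_run n2 M1 (column_ones h) u = (\<Sum>k<n2. run M1 (X k) u)"
    using merge_run_eq_sum_layers[OF M1 finite_V1] by blast
  define S where "S k = (\<Sum>v\<in>V1. X k v)" for k
  obtain s where bal: "\<forall>k<n2. S k \<in> {s, Suc s}"
    using \<open>balanced_layers V1 n2 X\<close> unfolding balanced_layers_def S_def by blast
  have S_card: "S k = card {v\<in>V1. X k v = 1}" if "k < n2" for k
    unfolding S_def using X01 that by (intro card_zero_one_eq_sum[OF finite_V1, symmetric]) auto
  then have S_le: "\<forall>k<n2. S k \<le> n1" using finite_V1 by (auto intro: card_mono)
  have "run M1 (X k) u = (if n1 - S k < \<pi>1 u then 1 else 0)" if "k < n2" for k
    using sorting_run_zero_one[OF finite_V1 M1_sorts _ u, of "X k"] X01 S_card that by simp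
  then have merged: "merge_run n2 M1 (column_ones h) u = (\<Sum>k<n2. if n1 - S k < \<pi>1 u then 1 else 0)"
    using X_run by simp
  have "{z\<in>V1 \<times> V2. h z = 1} = (SIGMA v:V1. {y\<in>V2. h (v, y) = 1})" by auto
  then have "card {z\<in>V1 \<times> V2. h z = 1} = (\<Sum>v\<in>V1. \<Sum>k<n2. X k v)"
    using finite_V1 finite_V2 X_sum by (simp add: column_ones_def)
  also have "\<dots> = (\<Sum>k<n2. S k)" unfolding S_def by (rule sum.swap)
  finally have ones: "card {z\<in>V1 \<times> V2. h z = 1} = (\<Sum>k<n2. S k)" .
  have \<rho>: "1 \<le> \<pi>1 u" "\<pi>1 u \<le> n1" and r: "1 \<le> \<pi>2 x" "\<pi>2 x \<le> n2"
    using bij_betwE[OF \<pi>1] bij_betwE[OF \<pi>2] u x by auto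
  show ?thesis
    unfolding run_product_network_merge_run[OF zero_one u x] merged ones product_rank_def
    using balanced_layers_threshold[OF bal S_le \<rho> r] by simp
qed

lemma product_network_sorts:
  assumes f: "bij_betw f (V1 \<times> V2) {1..card (V1 \<times> V2)}" and z: "z \<in> V1 \<times> V2"
  shows "run product_network f z = product_rank z"
proof -
  obtain u x where z: "z = (u, x)" "u \<in> V1" "x \<in> V2" using z by auto
  have card: "card (V1 \<times> V2) = n1 * n2" by (simp add: card_cartesian_product)
  show ?thesis
    unfolding z(1)
    by (rule sorts_if_sorts_zero_one[OF f])
      (use z product_rank_bounds product_network_zero_one card in auto)
qed

lemma product_rank_bij: "bij_betw product_rank (V1 \<times> V2) {1..card (V1 \<times> V2)}"
proof -
  have "inj_on product_rank (V1 \<times> V2)"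
  proof (rule inj_onI, clarify)
    fix u x u' x'
    assume z: "u \<in> V1" "x \<in> V2" "u' \<in> V1" "x' \<in> V2" and eq: "product_rank (u, x) = product_rank (u', x')"
    have r: "1 \<le> \<pi>2 x" "\<pi>2 x \<le> n2" "1 \<le> \<pi>2 x'" "\<pi>2 x' \<le> n2" "1 \<le> \<pi>1 u" "1 \<le> \<pi>1 u'"
      using bij_betwE[OF \<pi>1] bij_betwE[OF \<pi>2] z by auto
    define a where "a = \<pi>1 u - 1"
    define b where "b = \<pi>2 x - 1"
    define a' where "a' = \<pi>1 u' - 1"
    define b' where "b' = \<pi>2 x' - 1"
    have b: "b < n2" "b' < n2" using r by (auto simp: b_def b'_def)
    have "a * n2 + b = a' * n2 + b'"
      using eq r by (simp add: product_rank_def a_def b_def a'_def b'_def)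
    then have "(a * n2 + b) div n2 = (a' * n2 + b') div n2" "(a * n2 + b) mod n2 = (a' * n2 + b') mod n2"
      by simp_all
    then have "a = a'" "b = b'" using b by simp_all
    then have "\<pi>1 u = \<pi>1 u'" "\<pi>2 x = \<pi>2 x'" using r by (auto simp: a_def b_def a'_def b'_def)
    then show "u = u' \<and> x = x'"
      using z \<pi>1 \<pi>2 unfolding bij_betw_def inj_on_def by auto
  qed
  moreover have "product_rank ` (V1 \<times> V2) \<subseteq> {1..card (V1 \<times> V2)}"
    using product_rank_bounds by (auto simp: card_cartesian_product)
  ultimately show ?thesis
    using finite_V1 finite_V2 by (simp add: bij_betw_def card_image card_subset_eq)
qed

lemma length_network_prefix: "length (network_prefix i) = length M2 + i * (1 + length M2)"
  by (induction i) (simp_all add: network_prefix_def column_phase_def)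

lemma length_product_network: "length product_network = length M1 * length M2 + length M1 + length M2"
  by (simp add: product_network_def length_network_prefix algebra_simps)

lemma set_network_prefix:
  "m \<in> set (network_prefix i) \<Longrightarrow>
     (\<exists>up m2. m2 \<in> set M2 \<and> m = parallel V1 Pair (\<lambda>u. if up u then m2 else reverse_matching m2)) \<or>
     (\<exists>j<i. m = row_stage (M1 ! j))"
proof (induction i)
  case 0
  then show ?case by (auto simp: network_prefix_def column_phase_def)
next
  case (Suc i)
  then show ?case
    unfolding network_prefix_Suc by (auto simp: column_phase_def less_Suc_eq)
qed

lemma column_phase_subset_product_network: "set (column_phase (upward 0)) \<subseteq> set product_network"
  by (simp add: product_network_def network_prefix_def)

lemma row_stage_in_product_network:
  assumes "i < length M1" shows "row_stage (M1 ! i) \<in> set product_network"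
proof -
  have "set (network_prefix (Suc i)) \<subseteq> set (network_prefix (Suc i + k))" for k
    by (induction k) (auto simp: network_prefix_Suc)
  moreover have "Suc i + (length M1 - Suc i) = length M1" using assms by simp
  ultimately have "set (network_prefix (Suc i)) \<subseteq> set product_network"
    unfolding product_network_def by metis
  then show ?thesis by (auto simp: network_prefix_Suc)
qed

end

lemma dir_matching_proper:
  assumes "graph V E" "EH \<subseteq> E" "dir_matching EH m"
  shows "proper_matching m" "matching_on V m"
proof -
  have "u \<noteq> v \<and> u \<in> V \<and> v \<in> V" if "(u, v, b) \<in> m" for u v b
  proof -
    have "{u, v} \<in> E" using assms that unfolding dir_matching_def by force
    then obtain a b where "{u, v} = {a, b}" "a \<noteq> b" "a \<in> V" "b \<in> V"
      using assms(1) unfolding graph_def by blast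
    then show ?thesis by (auto simp: doubleton_eq_iff)
  qed
  with assms(3) show "proper_matching m" "matching_on V m"
    unfolding dir_matching_def proper_matching_def matching_on_def by blast+
qed

lemma cart_edges_mono:
  "EH1 \<subseteq> E1 \<Longrightarrow> EH2 \<subseteq> E2 \<Longrightarrow> cart_edges V1 EH1 V2 EH2 \<subseteq> cart_edges V1 E1 V2 E2"
  unfolding cart_edges_def by blast

lemma column_edge_in_cart_edges: "u \<in> V1 \<Longrightarrow> {a, b} \<in> E2 \<Longrightarrow> {(u, a), (u, b)} \<in> cart_edges V1 E1 V2 E2"
  unfolding cart_edges_def by blast

lemma row_edge_in_cart_edges: "x \<in> V2 \<Longrightarrow> {a, b} \<in> E1 \<Longrightarrow> {(a, x), (b, x)} \<in> cart_edges V1 E1 V2 E2"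
  unfolding cart_edges_def by blast

lemma connected_graph_cart_edges:
  assumes conn1: "connected_graph V1 E1" and conn2: "connected_graph V2 E2"
  shows "connected_graph (V1 \<times> V2) (cart_edges V1 E1 V2 E2)"
  unfolding connected_graph_def
proof (clarify)
  let ?R = "{(p, q). {p, q} \<in> cart_edges V1 E1 V2 E2}"
  fix a x b y assume ab: "a \<in> V1" "x \<in> V2" "b \<in> V1" "y \<in> V2"
  have "((a, x), (b, x)) \<in> ?R\<^sup>*"
  proof -
    have "(a, b) \<in> {(u, v). {u, v} \<in> E1}\<^sup>*" using conn1 ab unfolding connected_graph_def by blast
    then show ?thesis
      by (induction rule: rtrancl_induct)
        (auto intro: rtrancl_into_rtrancl row_edge_in_cart_edges[OF ab(2)])
  qed
  moreover have "((b, x), (b, y)) \<in> ?R\<^sup>*"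
  proof -
    have "(x, y) \<in> {(u, v). {u, v} \<in> E2}\<^sup>*" using conn2 ab unfolding connected_graph_def by blast
    then show ?thesis
      by (induction rule: rtrancl_induct)
        (auto intro: rtrancl_into_rtrancl column_edge_in_cart_edges[OF ab(3)])
  qed
  ultimately show "((a, x), (b, y)) \<in> ?R\<^sup>*" by (rule rtrancl_trans)
qed

context product_of_sorting_networks
begin

lemma dir_matching_column_stage:
  assumes m2: "m2 \<in> set M2" and dm2: "dir_matching EH2 m2"
  shows "dir_matching (cart_edges V1 EH1 V2 EH2)
    (parallel V1 Pair (\<lambda>u. if up u then m2 else reverse_matching m2))" (is "dir_matching _ ?m")
proof -
  have "\<forall>u\<in>V1. proper_matching (if up u then m2 else reverse_matching m2)"
    using M2 m2 proper_matching_reverse by auto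
  then have "proper_matching ?m" by (rule proper_matching_parallel[OF disjoint_columns])
  moreover have "ends p \<in> cart_edges V1 EH1 V2 EH2" if p_in: "p \<in> ?m" for p
  proof -
    obtain z1 z2 c where p: "p = (z1, z2, c)" by (cases p)
    then obtain u a b where u: "u \<in> V1" "(a, b, c) \<in> (if up u then m2 else reverse_matching m2)"
      "z1 = (u, a)" "z2 = (u, b)"
      using p_in by (auto elim: parallel_memE)
    have "ends q \<in> EH2" if "q \<in> m2" for q using dm2 that unfolding dir_matching_def by blast
    then have "{a, b} \<in> EH2"
      using u(2) by (cases "up u"; cases c) (force simp: insert_commute)+
    then show ?thesis using p u column_edge_in_cart_edges by simp
  qed
  ultimately show ?thesis unfolding dir_matching_def proper_matching_def by blast
qed

lemma dir_matching_row_stage: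
  assumes m1: "m1 \<in> set M1" and dm1: "dir_matching EH1 m1"
  shows "dir_matching (cart_edges V1 EH1 V2 EH2) (row_stage m1)"
proof -
  have "proper_matching (row_stage m1)"
    using M1 m1 unfolding row_stage_def by (simp add: proper_matching_parallel[OF disjoint_rows])
  moreover have "ends p \<in> cart_edges V1 EH1 V2 EH2" if p_in: "p \<in> row_stage m1" for p
  proof -
    obtain z1 z2 c where p: "p = (z1, z2, c)" by (cases p)
    then obtain x a b where x: "x \<in> V2" "(a, b, c) \<in> m1" "z1 = (a, x)" "z2 = (b, x)"
      using p_in unfolding row_stage_def by (auto elim: parallel_memE)
    have "{a, b} \<in> EH1" using x dm1 unfolding dir_matching_def by force
    then show ?thesis using p x row_edge_in_cart_edges by simp
  qed
  ultimately show ?thesis unfolding dir_matching_def proper_matching_def by blast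
qed

lemma product_network_dir_matching:
  assumes "\<forall>m\<in>set M1. dir_matching EH1 m" and "\<forall>m\<in>set M2. dir_matching EH2 m"
    and "m \<in> set product_network"
  shows "dir_matching (cart_edges V1 EH1 V2 EH2) m"
  using set_network_prefix[OF assms(3)[unfolded product_network_def]] assms(1,2)
  by (auto intro: dir_matching_column_stage dir_matching_row_stage)

lemma product_network_covers:
  assumes cov1: "\<forall>e\<in>EH1. \<exists>m\<in>set M1. \<exists>p\<in>m. e = ends p"
    and cov2: "\<forall>e\<in>EH2. \<exists>m\<in>set M2. \<exists>p\<in>m. e = ends p"
    and e: "e \<in> cart_edges V1 EH1 V2 EH2"
  shows "\<exists>m\<in>set product_network. \<exists>p\<in>m. e = ends p"
proof -
  obtain u1 u2 v1 v2 where e: "e = {(u1, u2), (v1, v2)}"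
    and cases: "(u1 = v1 \<and> u1 \<in> V1 \<and> {u2, v2} \<in> EH2) \<or> (u2 = v2 \<and> u2 \<in> V2 \<and> {u1, v1} \<in> EH1)"
    using e unfolding cart_edges_def by blast
  from cases show ?thesis
  proof (elim disjE conjE)
    assume eq: "u1 = v1" and u1: "u1 \<in> V1" and "{u2, v2} \<in> EH2"
    then obtain m2 a b c where m2: "m2 \<in> set M2" "(a, b, c) \<in> m2" "{u2, v2} = {a, b}"
      using cov2 by fastforce
    define m where "m = parallel V1 Pair (\<lambda>u. if upward 0 u then m2 else reverse_matching m2)"
    have "((u1, a), (u1, b), c) \<in> m \<or> ((u1, b), (u1, a), c) \<in> m"
      using parallel_memI[of u1 V1 _ _ c "\<lambda>u. if upward 0 u then m2 else reverse_matching m2" Pair]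
        u1 m2(2)
      unfolding m_def by (cases c; cases "upward 0 u1") auto
    moreover have "m \<in> set product_network"
      using column_phase_subset_product_network m2(1) unfolding column_phase_def m_def by auto
    moreover have "e = ends ((u1, a), (u1, b), c)" "e = ends ((u1, b), (u1, a), c)"
      using e eq m2(3) by (auto simp: doubleton_eq_iff)
    ultimately show ?thesis by blast
  next
    assume eq: "u2 = v2" and u2: "u2 \<in> V2" and "{u1, v1} \<in> EH1"
    then obtain m1 a b c where m1: "m1 \<in> set M1" "(a, b, c) \<in> m1" "{u1, v1} = {a, b}"
      using cov1 by fastforce
    then obtain j where j: "j < length M1" "M1 ! j = m1" by (meson in_set_conv_nth)
    have "((a, u2), (b, u2), c) \<in> row_stage (M1 ! j)"
      unfolding row_stage_def using parallel_memI[of u2 V2 a b c "\<lambda>_. M1 ! j"] u2 m1(2) j(2) by simp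
    moreover have "e = ends ((a, u2), (b, u2), c)" using e eq m1(3) by auto
    ultimately show ?thesis using row_stage_in_product_network[OF j(1)] by blast
  qed
qed

end

lemma sorting_network_le_sorting_number:
  assumes "sorting_network V E EH M \<pi>" shows "sorting_number V E \<le> enat (length M)"
proof -
  have "(LEAST d. \<exists>EH M \<pi>. sorting_network V E EH M \<pi> \<and> length M = d) \<le> length M"
    by (rule Least_le) (use assms in blast)
  moreover have "\<exists>EH M \<pi>. sorting_network V E EH M \<pi>" using assms by blast
  ultimately show ?thesis unfolding sorting_number_def by simp
qed

lemma sorting_number_attained:
  assumes ex: "\<exists>EH M \<pi>. sorting_network V E EH M \<pi>"
  obtains EH M \<pi> where "sorting_network V E EH M \<pi>" "sorting_number V E = enat (length M)"
proof -
  define d where "d = (LEAST d. \<exists>EH M \<pi>. sorting_network V E EH M \<pi> \<and> length M = d)"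
  have "\<exists>EH M \<pi>. sorting_network V E EH M \<pi> \<and> length M = d"
    unfolding d_def by (rule LeastI_ex) (use ex in blast)
  then obtain EH M \<pi> where "sorting_network V E EH M \<pi>" "length M = d" by blast
  moreover have "sorting_number V E = enat d" using ex unfolding sorting_number_def d_def by simp
  ultimately show thesis using that by simp
qed

lemma sorting_network_cart_edges:
  assumes G1: "graph V1 E1" and G2: "graph V2 E2"
    and S1: "sorting_network V1 E1 EH1 M1 \<pi>1" and S2: "sorting_network V2 E2 EH2 M2 \<pi>2"
  obtains M \<pi> where "sorting_network (V1 \<times> V2) (cart_edges V1 E1 V2 E2) (cart_edges V1 EH1 V2 EH2) M \<pi>"
    and "length M = length M1 * length M2 + length M1 + length M2"
proof -
  note S1' = S1[unfolded sorting_network_def] and S2' = S2[unfolded sorting_network_def]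
  have M1: "\<forall>m\<in>set M1. proper_matching m \<and> matching_on V1 m"
    using dir_matching_proper[OF G1, of EH1] S1' by simp
  have M2: "\<forall>m\<in>set M2. proper_matching m \<and> matching_on V2 m"
    using dir_matching_proper[OF G2, of EH2] S2' by simp
  interpret P: product_of_sorting_networks V1 V2 M1 M2 \<pi>1 \<pi>2
  proof
    show "finite V1" "finite V2" using G1 G2 by (simp_all add: graph_def)
  qed (use M1 M2 S1' S2' in simp_all)
  have "sorting_network (V1 \<times> V2) (cart_edges V1 E1 V2 E2) (cart_edges V1 EH1 V2 EH2)
      P.product_network P.product_rank"
    unfolding sorting_network_def
  proof (intro conjI)
    show "cart_edges V1 EH1 V2 EH2 \<subseteq> cart_edges V1 E1 V2 E2"
      using S1' S2' by (intro cart_edges_mono) simp_all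
    show "connected_graph (V1 \<times> V2) (cart_edges V1 EH1 V2 EH2)"
      using S1' S2' by (intro connected_graph_cart_edges) simp_all
    show "\<forall>m\<in>set P.product_network. dir_matching (cart_edges V1 EH1 V2 EH2) m"
      using S1' S2' by (intro ballI P.product_network_dir_matching) simp_all
    show "\<forall>e\<in>cart_edges V1 EH1 V2 EH2. \<exists>m\<in>set P.product_network. \<exists>p\<in>m. e = ends p"
      using S1' S2' by (intro ballI P.product_network_covers) simp_all
    show "bij_betw P.product_rank (V1 \<times> V2) {1..card (V1 \<times> V2)}" by (rule P.product_rank_bij)
    show "\<forall>f. bij_betw f (V1 \<times> V2) {1..card (V1 \<times> V2)} \<longrightarrow>
        (\<forall>z\<in>V1 \<times> V2. run P.product_network f z = P.product_rank z)"
      using P.product_network_sorts by blast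
  qed
  then show thesis using P.length_product_network by (rule that)
qed

theorem theorem2:
  fixes V1 :: "'a set" and E1 :: "'a set set" and V2 :: "'b set" and E2 :: "'b set set"
  assumes "graph V1 E1" and "graph V2 E2"
  shows "sorting_number (V1 \<times> V2) (cart_edges V1 E1 V2 E2)
           \<le> sorting_number V1 E1 * sorting_number V2 E2
              + sorting_number V1 E1 + sorting_number V2 E2"
proof (cases "(\<exists>EH M \<pi>. sorting_network V1 E1 EH M \<pi>) \<and> (\<exists>EH M \<pi>. sorting_network V2 E2 EH M \<pi>)")
  case True
  then have ex1: "\<exists>EH M \<pi>. sorting_network V1 E1 EH M \<pi>"
    and ex2: "\<exists>EH M \<pi>. sorting_network V2 E2 EH M \<pi>" by blast+
  obtain EH1 M1 \<pi>1 where S1: "sorting_network V1 E1 EH1 M1 \<pi>1" "sorting_number V1 E1 = length M1"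
    using sorting_number_attained[OF ex1] .
  obtain EH2 M2 \<pi>2 where S2: "sorting_network V2 E2 EH2 M2 \<pi>2" "sorting_number V2 E2 = length M2"
    using sorting_number_attained[OF ex2] .
  obtain M \<pi> where N: "sorting_network (V1 \<times> V2) (cart_edges V1 E1 V2 E2) (cart_edges V1 EH1 V2 EH2) M \<pi>"
    and length: "length M = length M1 * length M2 + length M1 + length M2"
    using sorting_network_cart_edges[OF assms S1(1) S2(1)] .
  have "sorting_number (V1 \<times> V2) (cart_edges V1 E1 V2 E2) \<le> enat (length M)"
    using N by (rule sorting_network_le_sorting_number)
  then show ?thesis unfolding length S1(2) S2(2) by simp
next
  case False
  then have "sorting_number V1 E1 = \<infinity> \<or> sorting_number V2 E2 = \<infinity>"
    unfolding sorting_number_def by auto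
  then show ?thesis by (elim disjE) simp_all
qed

end
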